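(* Assume $\xi_p\in F$, let $m\ge1$, and suppose $K/F$ is cyclotomic, i.e. $K=F(\mu_{p^k})$ for some $k\ge1$; if $p=2$ assume moreover $\omega>1$. Let $d\in\mathbb Z$ satisfy $d\equiv\chi(\sigma)\pmod{p^{\min\{m,\nu\}}}$, where $\chi$ is the cyclotomic character of $K/F$. Then $((-\infty,\dots,-\infty),d)$ is a minimal norm pair of length $m$.
   Context: Let $p$ be a prime, $n\ge1$, and $K/F$ a cyclic Galois extension of degree $p^n$ with $\mathrm{char}(K)\neq p$; $G=\mathrm{Gal}(K/F)=\langle\sigma\rangle$. For $0\le i\le n$ let $K_i$ be the intermediate field with $[K_i:F]=p^i$. For $k\ge1$, $\mu_{p^k}$ is the group of $p^k$-th roots of unity. $\omega$ (resp. $\nu$) is $\infty$ if $F$ (resp. $K$) contains $\mu_{p^k}$ for all $k$, and otherwise the largest $k$ with $\mu_{p^k}\subseteq F$ (resp. $\subseteq K$). $U_i=1+p^i\mathbb Z$, $v_p$ the $p$-adic valuation. $\chi(\sigma)\in(\mathbb Z/p^\nu\mathbb Z)^\times$ is defined by $\sigma(\zeta)=\zeta^{\chi(\sigma)}$ for $\zeta\in\mu_{p^\nu}$. Norm pair: for $m\ge1$, a pair $(\mathbf a,d)$ with $\mathbf a=(a_0,\dots,a_{m-1})\in\{-\infty,0,1,\dots,n\}^m$, $a_0<n$, and $d\in U_1$ is a norm pair of length $m$ if there exist $\alpha,\delta_m\in K^\times$ and $\delta_i\in K_{a_i}^\times$ for $0\le i<m$ (with $\delta_i=1$ when $a_i=-\infty$)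 such that $\sigma(\alpha)=\alpha^d\delta_0\delta_1^p\cdots\delta_m^{p^m}$ and $\xi_p=N_{K/F}(\alpha)^{(d-1)/p}\,N_{K_{n-1}/F}(\delta_0)\prod_{i=1}^m N_{K/F}(\delta_i)^{p^{i-1}}$ for a fixed primitive $p$-th root of unity $\xi_p$. Order: $(\mathbf a,d)\le(\mathbf a',d')$ if $\mathbf a<\mathbf a'$ lexicographically ($-\infty$ smallest), or $\mathbf a=\mathbf a'$ and $\min\{v_p(d'-1),m\}\le\min\{v_p(d-1),m\}$. A norm pair of length $m$ is minimal if it is $\le$ every norm pair of length $m$. *)

theory Defs
  imports Main "HOL-Computational_Algebra.Primes" "HOL-Library.Extended_Nat"
begin

text \<open>Setting: K is the type 'k (a field), sigma a field automorphism of K of order p^n,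
  F the fixed field of sigma (so K/F is cyclic Galois of degree p^n with group generated
  by sigma, by Artin's theorem).\<close>

definition field_aut :: "('k::field \<Rightarrow> 'k) \<Rightarrow> bool" where
  "field_aut s \<longleftrightarrow> bij s \<and> (\<forall>x y. s (x + y) = s x + s y) \<and> (\<forall>x y. s (x * y) = s x * s y)
      \<and> s 1 = 1"

definition cyclic_gen :: "('k::field \<Rightarrow> 'k) \<Rightarrow> nat \<Rightarrow> nat \<Rightarrow> bool" where
  "cyclic_gen s p n \<longleftrightarrow> field_aut s \<and> (s ^^ (p ^ n) = id) \<and> (s ^^ (p ^ (n - 1)) \<noteq> id)"

text \<open>Fixed field of sigma^(p^i): the intermediate field K_i with [K_i:F] = p^i.
  K_0 = F, K_n = K.\<close>
definition Kfix :: "('k::field \<Rightarrow> 'k) \<Rightarrow> nat \<Rightarrow> nat \<Rightarrow> 'k set" where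
  "Kfix s p i = {x. (s ^^ (p ^ i)) x = x}"

definition baseF :: "('k::field \<Rightarrow> 'k) \<Rightarrow> 'k set" where
  "baseF s = {x. s x = x}"

text \<open>Norm from K_j to F: product over the conjugates sigma^l, l < p^j.\<close>
definition normj :: "('k::field \<Rightarrow> 'k) \<Rightarrow> nat \<Rightarrow> nat \<Rightarrow> 'k \<Rightarrow> 'k" where
  "normj s p j x = (\<Prod>l<p ^ j. (s ^^ l) x)"

definition subfield_set :: "'k::field set \<Rightarrow> bool" where
  "subfield_set S \<longleftrightarrow> 0 \<in> S \<and> 1 \<in> S \<and> (\<forall>x\<in>S. \<forall>y\<in>S. x + y \<in> S \<and> x * y \<in> S)
     \<and> (\<forall>x\<in>S. - x \<in> S \<and> inverse x \<in> S)"

definition contains_mu :: "'k::field set \<Rightarrow> nat \<Rightarrow> nat \<Rightarrow> bool" where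
  "contains_mu A p k \<longleftrightarrow> (\<exists>z\<in>A. z ^ (p ^ k) = 1 \<and> z ^ (p ^ (k - 1)) \<noteq> 1)"

definition mu_level :: "'k::field set \<Rightarrow> nat \<Rightarrow> enat" where
  "mu_level A p = (if \<forall>k\<ge>1. contains_mu A p k then \<infinity>
       else enat (GREATEST k. k = 0 \<or> contains_mu A p k))"

definition cyclotomic :: "('k::field \<Rightarrow> 'k) \<Rightarrow> nat \<Rightarrow> bool" where
  "cyclotomic s p \<longleftrightarrow> (\<exists>k\<ge>1. contains_mu (UNIV::'k set) p k \<and>
      (\<forall>S. subfield_set S \<and> baseF s \<subseteq> S \<and> {z. z ^ (p ^ k) = 1} \<subseteq> S \<longrightarrow> S = UNIV))"

text \<open>d is congruent to chi(sigma) modulo p^j (j <= nu): sigma acts on mu_{p^j} by zeta -> zeta^d.\<close>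
definition chi_cong :: "('k::field \<Rightarrow> 'k) \<Rightarrow> nat \<Rightarrow> int \<Rightarrow> nat \<Rightarrow> bool" where
  "chi_cong s p d j \<longleftrightarrow> (\<forall>z::'k. z ^ (p ^ j) = 1 \<longrightarrow> s z = z powi d)"

text \<open>Exponent vectors: entries None = -infinity, Some t = t.\<close>
fun opt_less :: "nat option \<Rightarrow> nat option \<Rightarrow> bool" where
  "opt_less None (Some _) = True"
| "opt_less (Some a) (Some b) = (a < b)"
| "opt_less _ None = False"

definition lex_less :: "nat option list \<Rightarrow> nat option list \<Rightarrow> bool" where
  "lex_less xs ys \<longleftrightarrow> (\<exists>i < min (length xs) (length ys).
       take i xs = take i ys \<and> opt_less (xs ! i) (ys ! i))"

text \<open>min{v_p(x), m}, with v_p(0) = infinity.\<close>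
definition vmin :: "nat \<Rightarrow> nat \<Rightarrow> int \<Rightarrow> nat" where
  "vmin p m x = (if x = 0 then m else min (multiplicity (int p) x) m)"

definition norm_pair ::
  "('k::field \<Rightarrow> 'k) \<Rightarrow> nat \<Rightarrow> nat \<Rightarrow> 'k \<Rightarrow> nat \<Rightarrow> nat option list \<Rightarrow> int \<Rightarrow> bool" where
  "norm_pair s p n xi m a d \<longleftrightarrow>
     m \<ge> 1 \<and> length a = m \<and>
     (\<forall>i<m. case a ! i of None \<Rightarrow> True | Some t \<Rightarrow> t \<le> n) \<and>
     (case a ! 0 of None \<Rightarrow> True | Some t \<Rightarrow> t < n) \<and>
     (int p dvd d - 1) \<and>
     (\<exists>(\<alpha>::'k) (\<delta>::nat \<Rightarrow> 'k).
        \<alpha> \<noteq> 0 \<and> (\<forall>i\<le>m. \<delta> i \<noteq> 0) \<and>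
        (\<forall>i<m. case a ! i of None \<Rightarrow> \<delta> i = 1 | Some t \<Rightarrow> \<delta> i \<in> Kfix s p t) \<and>
        s \<alpha> = \<alpha> powi d * (\<Prod>i\<le>m. \<delta> i ^ (p ^ i)) \<and>
        xi = (normj s p n \<alpha>) powi ((d - 1) div int p) * normj s p (n - 1) (\<delta> 0)
              * (\<Prod>i\<in>{1..m}. normj s p n (\<delta> i) ^ (p ^ (i - 1))))"

definition np_le :: "nat \<Rightarrow> nat \<Rightarrow> nat option list \<Rightarrow> int \<Rightarrow> nat option list \<Rightarrow> int \<Rightarrow> bool" where
  "np_le p m a d a' d' \<longleftrightarrow> lex_less a a' \<or> (a = a' \<and> vmin p m (d' - 1) \<le> vmin p m (d - 1))"

definition minimal_norm_pair ::
  "('k::field \<Rightarrow> 'k) \<Rightarrow> nat \<Rightarrow> nat \<Rightarrow> 'k \<Rightarrow> nat \<Rightarrow> nat option list \<Rightarrow> int \<Rightarrow> bool" where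
  "minimal_norm_pair s p n xi m a d \<longleftrightarrow> norm_pair s p n xi m a d \<and>
     (\<forall>a' d'. norm_pair s p n xi m a' d' \<longrightarrow> np_le p m a d a' d')"

end

theory Submission
  imports Defs "HOL-Computational_Algebra.Polynomial"
begin

text \<open>Write everything in terms of a primitive p^\<nu>-th root of unity \<zeta> of maximal level in K, on
  which \<sigma> acts as \<zeta> \<mapsto> \<zeta>^c. Since K is generated over F by \<zeta>, the order of \<sigma> is the order
  of c modulo p^\<nu>, and lifting the exponent (using \<mu>_p \<subseteq> F, resp. \<mu>_4 \<subseteq> F) gives
  v_p(c - 1) = \<nu> - n; in particular \<nu> is finite. For existence, \<alpha> = \<zeta>^a and \<delta>_m = \<zeta>^(at),
  with c \<equiv> d + p^m t (mod p^\<nu>), satisfy the norm relations, all of which reduce to congruences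
  modulo p^\<nu>. For minimality, any exponent vector beats (-\<infinity>, ..., -\<infinity>) lexicographically, and
  if a norm pair with that vector and d' had v_p(d' - 1) > v_p(d - 1) = u < m, the norm relation
  would exhibit \<xi> as the p^u-th power of a primitive p^(u+1)-th root of unity y in F; but \<sigma>
  acts on y by y \<mapsto> y^d \<noteq> y.\<close>

section \<open>p-adic valuations of integers\<close>

lemma sq_dvd_pow_sub_1_sub_linear: "((x::int) - 1) ^ 2 dvd x ^ i - 1 - int i * (x - 1)"
proof (induction i)
  case (Suc i)
  have "x ^ Suc i - 1 - int (Suc i) * (x - 1) = x * (x ^ i - 1 - int i * (x - 1)) + int i * (x - 1) ^ 2"
    by (simp add: algebra_simps power2_eq_square)
  thus ?case using Suc by (simp add: dvd_add)
qed simp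

lemma prime_sq_dvd_geometric_sum_sub:
  fixes x :: int
  assumes p: "prime p" and px: "int p dvd x - 1" and two: "p = 2 \<longrightarrow> 4 dvd x - 1"
  shows "int p ^ 2 dvd (\<Sum>i<p. x ^ i) - int p"
proof (cases "p = 2")
  case True
  have "(\<Sum>i<p. x ^ i) - int p = x - 1" unfolding True by (simp add: numeral_2_eq_2)
  thus ?thesis using True two by simp
next
  case False
  hence "p > 2" using prime_ge_2_nat[OF p] by linarith
  hence "odd p" using prime_odd_nat[OF p] by blast
  then obtain q where q: "p = 2 * q + 1" by (rule oddE)
  have "(\<Sum>i<2 * q + 1. int i) = int (2 * q + 1) * int q"
    by (induction q) (simp_all add: algebra_simps)
  hence "(\<Sum>i<p. int i * (x - 1)) = (x - 1) * (int p * int q)"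
    using q by (simp add: mult.commute flip: sum_distrib_right)
  hence "(\<Sum>i<p. x ^ i - 1 - int i * (x - 1)) = (\<Sum>i<p. x ^ i) - int p - (x - 1) * (int p * int q)"
    by (simp add: sum_subtractf)
  moreover have "(x - 1) ^ 2 dvd (\<Sum>i<p. x ^ i - 1 - int i * (x - 1))"
    by (rule dvd_sum) (rule sq_dvd_pow_sub_1_sub_linear)
  ultimately have "(x - 1) ^ 2 dvd (\<Sum>i<p. x ^ i) - int p - (x - 1) * (int p * int q)" by simp
  moreover have "int p ^ 2 dvd (x - 1) ^ 2" using px by (simp add: dvd_power_same)
  ultimately have "int p ^ 2 dvd (\<Sum>i<p. x ^ i) - int p - (x - 1) * (int p * int q)"
    by (rule dvd_trans[rotated])
  moreover have "int p ^ 2 dvd (x - 1) * (int p * int q)"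
    using px by (simp add: power2_eq_square mult_dvd_mono)
  ultimately have "int p ^ 2 dvd (\<Sum>i<p. x ^ i) - int p - (x - 1) * (int p * int q)
      + (x - 1) * (int p * int q)" by (rule dvd_add)
  thus ?thesis by simp
qed

lemma lifting_the_exponent_step:
  fixes x :: int
  assumes p: "prime p" and a: "a \<ge> 1" and two: "p = 2 \<longrightarrow> a \<ge> 2"
    and dvd: "int p ^ a dvd x - 1" and not_dvd: "\<not> int p ^ (a + 1) dvd x - 1"
  shows "int p ^ (a + 1) dvd x ^ p - 1 \<and> \<not> int p ^ (a + 2) dvd x ^ p - 1"
proof -
  have pp: "prime (int p)" using p by simp
  have "int p ^ 1 dvd x - 1" using dvd a by (meson dvd_trans le_imp_power_dvd)
  moreover have "p = 2 \<longrightarrow> 4 dvd x - 1"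
    using dvd two le_imp_power_dvd[of 2 a "2::int"] by (auto intro: dvd_trans)
  ultimately obtain r where "(\<Sum>i<p. x ^ i) - int p = int p ^ 2 * r"
    using prime_sq_dvd_geometric_sum_sub[OF p] by fastforce
  hence r: "(\<Sum>i<p. x ^ i) = int p * (1 + int p * r)"
    by (simp add: algebra_simps power2_eq_square)
  obtain u where u: "x - 1 = int p ^ a * u" using dvd by blast
  have "\<not> int p dvd u"
  proof
    assume "int p dvd u"
    then obtain v where "u = int p * v" by blast
    thus False using not_dvd u by (simp add: mult.assoc)
  qed
  moreover have "\<not> int p dvd 1 + int p * r"
    using pp by (simp add: dvd_add_left_iff prime_int_iff)
  ultimately have not_dvd': "\<not> int p dvd u * (1 + int p * r)"
    using pp by (simp add: prime_dvd_mult_iff)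
  have "x ^ p - 1 = (x - 1) * (\<Sum>i<p. x ^ i)" by (rule power_diff_1_eq)
  also have "\<dots> = int p ^ a * u * (int p * (1 + int p * r))" by (simp only: r u)
  finally have x: "x ^ p - 1 = int p ^ (a + 1) * (u * (1 + int p * r))" by (simp add: ac_simps)
  have "int p ^ (a + 1) \<noteq> 0" using pp by (simp add: prime_gt_0_int)
  hence "\<not> int p ^ (a + 1) * int p dvd int p ^ (a + 1) * (u * (1 + int p * r))"
    using not_dvd' by (subst dvd_mult_cancel_left) simp
  moreover have "int p ^ (a + 2) = int p ^ (a + 1) * int p" by simp
  ultimately show ?thesis unfolding x by (metis dvd_triv_left)
qed

lemma lifting_the_exponent:
  fixes x :: int
  assumes p: "prime p" and a: "a \<ge> 1" and two: "p = 2 \<longrightarrow> a \<ge> 2"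
    and "int p ^ a dvd x - 1" and "\<not> int p ^ (a + 1) dvd x - 1"
  shows "int p ^ (a + j) dvd x ^ p ^ j - 1 \<and> \<not> int p ^ (a + j + 1) dvd x ^ p ^ j - 1"
proof (induction j)
  case (Suc j)
  have "p = 2 \<longrightarrow> a + j \<ge> 2" "a + j \<ge> 1" using two a by auto
  from lifting_the_exponent_step[OF p this(2,1) Suc[THEN conjunct1] Suc[THEN conjunct2]]
  show ?case by (simp add: power_mult[symmetric] mult.commute)
qed (use assms in simp)

lemma power_dvd_pow_prime_power_sub_1_iff:
  fixes c :: int
  assumes p: "prime p" and "c \<noteq> 1" and "int p dvd c - 1" and "p = 2 \<longrightarrow> 4 dvd c - 1"
  shows "int p ^ e dvd c ^ p ^ j - 1 \<longleftrightarrow> e \<le> multiplicity (int p) (c - 1) + j"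
proof -
  define w where "w = multiplicity (int p) (c - 1)"
  have "\<not> is_unit (int p)" using prime_gt_1_nat[OF p] by simp
  hence dvd_iff: "int p ^ i dvd c - 1 \<longleftrightarrow> i \<le> w" for i
    using \<open>c \<noteq> 1\<close> power_dvd_iff_le_multiplicity[of "c - 1" "int p" i] by (simp add: w_def)
  have "w \<ge> 1" using dvd_iff[of 1] assms(3) by simp
  moreover have "p = 2 \<longrightarrow> w \<ge> 2" using dvd_iff[of 2] assms(4) by auto
  ultimately have lte: "int p ^ (w + j) dvd c ^ p ^ j - 1" "\<not> int p ^ (w + j + 1) dvd c ^ p ^ j - 1"
    using lifting_the_exponent[OF p, of w c j] dvd_iff[of w] dvd_iff[of "w + 1"] by auto
  show ?thesis unfolding w_def[symmetric]
  proof
    assume dvd: "int p ^ e dvd c ^ p ^ j - 1"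
    show "e \<le> w + j"
    proof (rule ccontr)
      assume "\<not> e \<le> w + j"
      hence "int p ^ (w + j + 1) dvd int p ^ e" by (intro le_imp_power_dvd) simp
      thus False using dvd lte(2) dvd_trans by blast
    qed
  next
    assume "e \<le> w + j"
    hence "int p ^ e dvd int p ^ (w + j)" by (rule le_imp_power_dvd)
    thus "int p ^ e dvd c ^ p ^ j - 1" using lte(1) by (rule dvd_trans)
  qed
qed

lemma dvd_geometric_sum:
  fixes c :: int
  assumes "int p dvd c - 1" and "p dvd N"
  shows "int p dvd (\<Sum>l<N. c ^ l)"
proof -
  have "c - 1 dvd c ^ l - 1" for l by (simp add: power_diff_1_eq)
  hence "int p dvd (\<Sum>l<N. c ^ l - 1)" using assms(1) by (auto intro: dvd_sum dvd_trans)
  moreover have "int p dvd int N" using assms(2) by simp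
  ultimately have "int p dvd (\<Sum>l<N. c ^ l - 1) + int N" by (rule dvd_add)
  thus ?thesis by (simp add: sum_subtractf)
qed

lemma norm_exponent_congruence:
  fixes c d t S q1 q2 :: int
  assumes "p > 0" "G \<ge> 1" "m \<ge> 1" and "int p dvd S"
    and "d - 1 = int p * q1" "c - 1 = int p * q2" and "int p ^ G dvd c - d - int p ^ m * t"
  shows "int p ^ G dvd S * (q1 + t * int p ^ (m - 1) - q2)"
proof -
  have "int p * (q1 + t * int p ^ (m - 1) - q2) = - (c - d - int p ^ m * t)"
    using assms(3,5,6) by (cases m) (simp_all add: algebra_simps)
  hence "int p ^ G dvd int p * (q1 + t * int p ^ (m - 1) - q2)"
    using assms(7) by (simp only: dvd_minus_iff)
  hence "int p * int p ^ (G - 1) dvd int p * (q1 + t * int p ^ (m - 1) - q2)"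
    using assms(2) by (cases G) simp_all
  hence "int p ^ (G - 1) dvd q1 + t * int p ^ (m - 1) - q2" using assms(1) by simp
  with assms(4) have "int p * int p ^ (G - 1) dvd S * (q1 + t * int p ^ (m - 1) - q2)"
    by (rule mult_dvd_mono)
  thus ?thesis using assms(2) by (cases G) simp_all
qed

lemma le_vmin_iff:
  assumes "p > 1" and "k \<le> m"
  shows "k \<le> vmin p m x \<longleftrightarrow> int p ^ k dvd x"
proof (cases "x = 0")
  case False
  have "\<not> is_unit (int p)" using assms(1) by simp
  thus ?thesis
    using False assms(2) power_dvd_iff_le_multiplicity[OF False, of "int p" k] by (simp add: vmin_def)
qed (use assms in \<open>simp add: vmin_def\<close>)

lemma vmin_le_vmin:
  assumes "p > 1" and "\<And>u. u < m \<Longrightarrow> int p ^ (u + 1) dvd x' \<Longrightarrow> int p ^ (u + 1) dvd x"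
  shows "vmin p m x' \<le> vmin p m x"
proof (cases "vmin p m x' = 0")
  case False
  define u where "u = vmin p m x' - 1"
  have u: "u < m" "vmin p m x' = u + 1" using False by (auto simp: u_def vmin_def)
  hence "int p ^ (u + 1) dvd x'" using le_vmin_iff[OF assms(1), of "u + 1" m x'] by simp
  hence "int p ^ (u + 1) dvd x" using assms(2) u(1) by blast
  thus ?thesis using le_vmin_iff[OF assms(1), of "u + 1" m x] u by simp
qed simp

section \<open>Roots of unity\<close>

definition prim_root :: "nat \<Rightarrow> nat \<Rightarrow> 'a::field \<Rightarrow> bool" where
  "prim_root p M z \<longleftrightarrow> z ^ p ^ M = 1 \<and> z ^ p ^ (M - 1) \<noteq> 1"

lemma contains_mu_iff_prim_root: "contains_mu A p M \<longleftrightarrow> (\<exists>z\<in>A. prim_root p M z)"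
  by (simp add: contains_mu_def prim_root_def)

lemma finite_roots_of_unity:
  assumes "N \<ge> 1"
  shows "finite {x::'a::field. x ^ N = 1}" and "card {x::'a::field. x ^ N = 1} \<le> N"
proof -
  define q :: "'a poly" where "q = monom 1 N - 1"
  have "coeff q N = 1" using assms by (simp add: q_def)
  hence q0: "q \<noteq> 0" by auto
  have "degree q \<le> N" unfolding q_def
    by (rule order.trans[OF degree_diff_le_max]) (simp add: degree_monom_le)
  moreover have roots: "{x::'a. x ^ N = 1} = {x. poly q x = 0}" by (auto simp: q_def poly_monom)
  ultimately show "finite {x::'a. x ^ N = 1}" "card {x::'a. x ^ N = 1} \<le> N"
    using poly_roots_finite[OF q0] card_poly_roots_bound[OF q0] by auto
qed

text \<open>The N distinct powers of w exhaust the at most N roots of x^N - 1.\<close>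
lemma root_of_unity_in_powers:
  fixes w z :: "'a::field"
  assumes N: "N \<ge> 1" and w: "w ^ N = 1" and order: "\<And>i. 0 < i \<Longrightarrow> i < N \<Longrightarrow> w ^ i \<noteq> 1"
    and z: "z ^ N = 1"
  shows "\<exists>i<N. z = w ^ i"
proof -
  have w0: "w \<noteq> 0" using w N by (cases N) auto
  have pow_diff: "w ^ (j - i) = 1" if "w ^ i = w ^ j" "i \<le> j" for i j
    using that w0 by (simp add: power_diff)
  have "inj_on (\<lambda>i. w ^ i) {..<N}"
  proof (rule inj_onI)
    fix i j assume "i \<in> {..<N}" "j \<in> {..<N}" "w ^ i = w ^ j"
    then show "i = j" using pow_diff[of i j] pow_diff[of j i] order[of "j - i"] order[of "i - j"]
      by (cases i j rule: linorder_cases) auto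
  qed
  hence "card ((\<lambda>i. w ^ i) ` {..<N}) = N" by (simp add: card_image)
  moreover have "(\<lambda>i. w ^ i) ` {..<N} \<subseteq> {x. x ^ N = 1}"
    using w by (auto simp: power_mult[symmetric] mult.commute[of _ N] power_mult)
  ultimately have "(\<lambda>i. w ^ i) ` {..<N} = {x. x ^ N = 1}"
    using finite_roots_of_unity[OF N, where 'a='a] by (metis card_seteq)
  thus ?thesis using z by auto
qed

lemma prim_root_pow_prim_root:
  assumes "prim_root p M w" and "1 \<le> j" and "j \<le> M"
  shows "prim_root p j (w ^ p ^ (M - j))"
  using assms by (simp add: prim_root_def power_mult[symmetric] power_add[symmetric])

context
  fixes p M :: nat and w :: "'a::field"
  assumes p: "prime p" and M: "M \<ge> 1" and w: "prim_root p M w"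
begin

lemma prim_root_pow_eq_1_iff: "w ^ e = 1 \<longleftrightarrow> p ^ M dvd e"
proof
  assume e: "w ^ e = 1"
  have "p ^ M \<noteq> 0" using p by (simp add: prime_gt_0_nat)
  then obtain x y where xy: "p ^ M * x = e * y + gcd (p ^ M) e" using bezout_nat by blast
  have "w ^ (p ^ M * x) = w ^ (e * y) * w ^ gcd (p ^ M) e" by (simp add: xy power_add)
  hence g: "w ^ gcd (p ^ M) e = 1" using w e by (simp add: prim_root_def power_mult)
  obtain j where j: "j \<le> M" "gcd (p ^ M) e = p ^ j"
    using divides_primepow_nat[OF p, of "gcd (p ^ M) e" M] by auto
  show "p ^ M dvd e"
  proof (cases "j = M")
    case True thus ?thesis using j by (metis gcd_dvd2)
  next
    case False
    hence "p ^ j dvd p ^ (M - 1)" using j by (simp add: le_imp_power_dvd)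
    then obtain r where "p ^ (M - 1) = p ^ j * r" by blast
    hence "w ^ p ^ (M - 1) = 1" using g j by (simp add: power_mult)
    thus ?thesis using w by (simp add: prim_root_def)
  qed
next
  assume "p ^ M dvd e"
  then obtain r where "e = p ^ M * r" by blast
  thus "w ^ e = 1" using w by (simp add: prim_root_def power_mult)
qed

lemma prim_root_nonzero: "w \<noteq> 0"
  using w p by (auto simp: prim_root_def prime_gt_0_nat zero_power)

lemma prim_root_powi_eq_1_iff: "w powi e = 1 \<longleftrightarrow> int p ^ M dvd e"
proof (cases "e \<ge> 0")
  case True
  hence "w powi e = w ^ nat e" by (simp add: power_int_def)
  thus ?thesis using True prim_root_pow_eq_1_iff[of "nat e"]
    by (metis int_dvd_int_iff int_nat_eq of_nat_power)
next
  case False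
  hence "w powi e = 1 \<longleftrightarrow> w ^ nat (- e) = 1"
    by (simp add: power_int_def power_inverse)
  thus ?thesis using False prim_root_pow_eq_1_iff[of "nat (- e)"]
    by (metis dvd_minus_iff int_dvd_int_iff int_nat_eq less_le_not_le neg_0_less_iff_less
        nle_le of_nat_power)
qed

lemma prim_root_powi_eq_iff: "w powi a = w powi b \<longleftrightarrow> int p ^ M dvd a - b"
  using prim_root_nonzero prim_root_powi_eq_1_iff[of "a - b"] by (auto simp: power_int_diff)

lemma root_of_unity_prim_root_power:
  assumes "z ^ p ^ M = 1"
  shows "\<exists>i. z = w ^ i"
proof -
  have "0 < p ^ M" using p by (simp add: prime_gt_0_nat)
  moreover have "w ^ i \<noteq> 1" if "0 < i" "i < p ^ M" for i
    using that prim_root_pow_eq_1_iff[of i] by (auto dest: nat_dvd_not_less)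
  ultimately show ?thesis
    using root_of_unity_in_powers[of "p ^ M" w z] w assms by (auto simp: prim_root_def)
qed

lemma prim_root_1_powi:
  assumes "int p ^ M dvd int p * e" and "\<not> int p ^ (M + 1) dvd int p * e"
  shows "prim_root p 1 (w powi e)"
proof -
  have "\<not> int p ^ M dvd e" using assms(2) by (auto simp: mult.commute)
  thus ?thesis using assms(1) prim_root_powi_eq_1_iff[of e] prim_root_powi_eq_1_iff[of "e * int p"]
    by (simp add: prim_root_def power_int_mult mult.commute flip: power_int_of_nat)
qed

end

lemma contains_mu_mono:
  assumes "contains_mu A p k" and "\<And>z j. z \<in> A \<Longrightarrow> z ^ j \<in> A" and "1 \<le> j" "j \<le> k"
  shows "contains_mu A p j"
proof -
  obtain z where z: "z \<in> A" "prim_root p k z"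
    using assms(1) by (auto simp: contains_mu_iff_prim_root)
  thus ?thesis using assms(2)[OF z(1)] prim_root_pow_prim_root[OF z(2) assms(3,4)]
    by (auto simp: contains_mu_iff_prim_root)
qed

lemma mu_level_finite:
  assumes one: "contains_mu A p 1" and bound: "\<And>M. contains_mu A p M \<Longrightarrow> M < B"
  obtains G where "mu_level A p = enat G" "contains_mu A p G" "\<And>M. contains_mu A p M \<Longrightarrow> M \<le> G"
proof -
  define P where "P = (\<lambda>k. k = 0 \<or> contains_mu A p k)"
  have bounded: "y \<le> B" if "P y" for y
    using that bound[of y] by (auto simp: P_def)
  have "\<not> contains_mu A p (B + 1)" using bound[of "B + 1"] by auto
  hence "\<not> (\<forall>k\<ge>1. contains_mu A p k)" by auto
  hence "mu_level A p = enat (Greatest P)" by (simp add: mu_level_def P_def)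
  moreover have le: "M \<le> Greatest P" if "contains_mu A p M" for M
    using Greatest_le_nat[of P M B, OF _ bounded] that by (simp add: P_def)
  moreover have "contains_mu A p (Greatest P)"
    using GreatestI_nat[of P 1 B, OF _ bounded] one le[OF one] by (auto simp: P_def)
  ultimately show ?thesis using that by blast
qed

lemma contains_mu_2_if_mu_level_gt_1:
  assumes closed: "\<And>z j. z \<in> A \<Longrightarrow> z ^ j \<in> A" and level: "mu_level A p > 1"
  shows "contains_mu A p 2"
proof (cases "\<forall>k\<ge>1. contains_mu A p k")
  case False
  then obtain k where k: "k \<ge> 1" "\<not> contains_mu A p k" by blast
  define P where "P = (\<lambda>k. k = 0 \<or> contains_mu A p k)"
  have bounded: "y \<le> k" if "P y" for y
  proof (rule ccontr)
    assume "\<not> y \<le> k"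
    thus False using that contains_mu_mono[of A p y k, OF _ closed] k by (auto simp: P_def)
  qed
  have "mu_level A p = enat (Greatest P)" using False by (simp add: mu_level_def P_def)
  hence "Greatest P > 1" using level by (simp add: one_enat_def)
  moreover have "P (Greatest P)" using GreatestI_nat[of P 0 k, OF _ bounded] by (simp add: P_def)
  ultimately show ?thesis using contains_mu_mono[of A p "Greatest P" 2, OF _ closed] by (auto simp: P_def)
qed simp

section \<open>Field automorphisms\<close>

locale field_automorphism =
  fixes s :: "'k::field \<Rightarrow> 'k"
  assumes aut: "field_aut s"
begin

lemma field_aut_mult: "s (x * y) = s x * s y"
  and field_aut_add: "s (x + y) = s x + s y"
  and field_aut_1: "s 1 = 1"
  using aut by (simp_all add: field_aut_def)

lemma field_aut_0: "s 0 = 0"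
  using field_aut_add[of 0 0] by (metis add.right_neutral add_left_cancel)

lemma field_aut_minus: "s (- x) = - s x"
  using field_aut_add[of x "- x"] field_aut_0 by (simp add: eq_neg_iff_add_eq_0 add.commute)

lemma field_aut_inverse: "s (inverse x) = inverse (s x)"
proof (cases "x = 0")
  case False
  hence "s x * s (inverse x) = 1" using field_aut_mult[of x "inverse x"] field_aut_1 by simp
  thus ?thesis by (metis inverse_unique)
qed (simp add: field_aut_0)

lemma field_aut_power: "s (x ^ k) = s x ^ k"
  by (induction k) (simp_all add: field_aut_1 field_aut_mult)

lemma field_aut_powi: "s (x powi e) = s x powi e"
  by (simp add: power_int_def field_aut_power field_aut_inverse)

lemma field_aut_prod: "s (\<Prod>l<(N::nat). f l) = (\<Prod>l<N. s (f l))"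
  by (induction N) (simp_all add: field_aut_1 field_aut_mult)

lemma field_automorphism_funpow: "field_automorphism (s ^^ q)"
proof (induction q)
  case 0
  show ?case by unfold_locales (simp add: field_aut_def bij_id[unfolded id_def])
next
  case (Suc q)
  thus ?case using aut bij_comp[of "s ^^ q" s, unfolded comp_def]
    by unfold_locales (auto simp: field_automorphism_def field_aut_def)
qed

lemma subfield_set_fixed: "subfield_set {x. s x = x}"
  by (simp add: subfield_set_def field_aut_0 field_aut_1 field_aut_add field_aut_mult
      field_aut_minus field_aut_inverse)

lemma normj_1: "normj s p j 1 = 1"
  using field_automorphism.field_aut_1[OF field_automorphism_funpow] by (simp add: normj_def)

lemma normj_fixed:
  assumes "s ^^ (p ^ j) = id"
  shows "s (normj s p j x) = normj s p j x"
proof (cases "x = 0")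
  case True
  have "normj s p j x = 0 ^ p ^ j"
    using True field_automorphism.field_aut_0[OF field_automorphism_funpow] by (simp add: normj_def)
  thus ?thesis by (simp add: field_aut_power field_aut_0)
next
  case False
  define g where "g l = (s ^^ l) x" for l
  have "g 0 * s (normj s p j x) = g 0 * (\<Prod>l<p ^ j. g (Suc l))"
    by (simp add: normj_def field_aut_prod g_def)
  also have "\<dots> = (\<Prod>l<Suc (p ^ j). g l)" by (rule prod.lessThan_Suc_shift[symmetric])
  also have "\<dots> = normj s p j x * g (p ^ j)" by (simp add: normj_def g_def)
  also have "g (p ^ j) = g 0" using assms by (simp add: g_def)
  finally show ?thesis using False by (simp add: g_def mult.commute)
qed

lemma funpow_powi_eigenvector:
  assumes "s z = z powi c" and "z \<noteq> 0"
  shows "(s ^^ l) (z powi e) = z powi (c ^ l * e)"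
  by (induction l) (simp_all add: assms field_aut_powi power_int_mult mult.assoc)

lemma normj_powi_eigenvector:
  assumes "s z = z powi c" and "z \<noteq> 0"
  shows "normj s p j (z powi e) = z powi (e * (\<Sum>l<p ^ j. c ^ l))"
proof -
  have "(\<Prod>l<N. z powi f l) = z powi (\<Sum>l<N. f l)" for N and f :: "nat \<Rightarrow> int"
    by (induction N) (simp_all add: power_int_add assms(2))
  thus ?thesis
    by (simp add: normj_def funpow_powi_eigenvector[OF assms] sum_distrib_left mult.commute)
qed

lemma eigenvector_power:
  assumes "s z = z powi c"
  shows "s (z ^ N) = (z ^ N) powi c"
  using assms by (simp add: field_aut_power power_int_power power_int_power' mult.commute)

lemma prim_root_eigenvector:
  assumes "prime p" and "M \<ge> 1" and "prim_root p M z"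
  obtains c where "s z = z powi c"
proof -
  have "s z ^ p ^ M = s (z ^ p ^ M)" by (simp add: field_aut_power)
  hence "s z ^ p ^ M = 1" using assms(3) by (simp add: prim_root_def field_aut_1)
  then obtain i where "s z = z ^ i" using root_of_unity_prim_root_power[OF assms] by blast
  thus ?thesis using that[of "int i"] by simp
qed

text \<open>A primitive p^j-th root y is a power w^i of w = z^(p^(M-j)) with i prime to p,
  so the exponents by which s acts on y and on z agree modulo p^j.\<close>
lemma prim_root_eigen_exponents_cong:
  assumes p: "prime p" and "j \<ge> 1" and "j \<le> M"
    and z: "prim_root p M z" "s z = z powi c" and y: "prim_root p j y" "s y = y powi e"
  shows "int p ^ j dvd c - e"
proof -
  define w where "w = z ^ p ^ (M - j)"
  have w: "prim_root p j w" "s w = w powi c"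
    using prim_root_pow_prim_root[OF z(1) assms(2,3)] eigenvector_power[OF z(2)] by (simp_all add: w_def)
  obtain i where i: "y = w ^ i"
    using root_of_unity_prim_root_power[OF p \<open>j \<ge> 1\<close> w(1)] y(1) by (auto simp: prim_root_def)
  have "\<not> p dvd i"
  proof
    assume "p dvd i"
    then obtain i' where "i = p * i'" by blast
    hence "p ^ (j - 1) * i = p ^ j * i'" using \<open>j \<ge> 1\<close> by (cases j) (simp_all add: ac_simps)
    hence "y ^ p ^ (j - 1) = (w ^ p ^ j) ^ i'" by (simp add: i mult.commute flip: power_mult)
    hence "y ^ p ^ (j - 1) = 1" using w(1) by (simp add: prim_root_def)
    thus False using y(1) by (simp add: prim_root_def)
  qed
  hence "coprime (int p ^ j) (int i)"
    using prime_imp_coprime[OF p] by (simp flip: of_nat_power)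
  have "w powi (int i * c) = w powi (int i * e)"
    using y(2) eigenvector_power[OF w(2), of i] by (simp add: i power_int_power)
  hence "int p ^ j dvd int i * (c - e)"
    using prim_root_powi_eq_iff[OF p \<open>j \<ge> 1\<close> w(1)] by (simp add: algebra_simps)
  with \<open>coprime (int p ^ j) (int i)\<close> show ?thesis by (simp add: coprime_dvd_mult_right_iff)
qed

lemma chi_cong_exponent_dvd:
  assumes p: "prime p" and chi: "chi_cong s p d j" and "j \<ge> 1" "j \<le> M"
    and z: "prim_root p M z" "s z = z powi c"
  shows "int p ^ j dvd c - d"
proof -
  define y where "y = z ^ p ^ (M - j)"
  have y: "prim_root p j y" using prim_root_pow_prim_root[OF z(1) assms(3,4)] by (simp add: y_def)
  hence "s y = y powi d" using chi by (simp add: chi_cong_def prim_root_def)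
  thus ?thesis using prim_root_eigen_exponents_cong[OF p assms(3,4) z y] by simp
qed

end

section \<open>Norm pairs with exponent vector (-\<infinity>, ..., -\<infinity>)\<close>

lemma lex_less_replicate_None:
  assumes "length a = m" and "a \<noteq> replicate m None"
  shows "lex_less (replicate m None) a"
proof -
  have ex: "\<exists>i. i < m \<and> a ! i \<noteq> None"
    using assms by (metis length_replicate nth_equalityI nth_replicate)
  define i where "i = (LEAST i. i < m \<and> a ! i \<noteq> None)"
  have i: "i < m" "a ! i \<noteq> None" using LeastI_ex[OF ex] by (simp_all add: i_def)
  have "a ! k = None" if "k < i" for k
    using not_less_Least[of k "\<lambda>i. i < m \<and> a ! i \<noteq> None"] that i(1) by (simp add: i_def)
  hence "take i (replicate m None) = take i a" using i assms(1) by (intro nth_equalityI) auto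
  moreover have "opt_less (replicate m None ! i) (a ! i)" using i by (cases "a ! i") auto
  ultimately show ?thesis unfolding lex_less_def using i assms(1) by auto
qed

context field_automorphism
begin

lemma norm_relation_products_trivial_below:
  assumes "m \<ge> 1" and "\<And>i. i < m \<Longrightarrow> \<delta> i = 1"
  shows "(\<Prod>i\<le>m. \<delta> i ^ p ^ i) = \<delta> m ^ p ^ m"
    and "(\<Prod>i\<in>{1..m}. normj s p n (\<delta> i) ^ p ^ (i - 1)) = normj s p n (\<delta> m) ^ p ^ (m - 1)"
    and "normj s p (n - 1) (\<delta> 0) = 1"
proof -
  show "(\<Prod>i\<le>m. \<delta> i ^ p ^ i) = \<delta> m ^ p ^ m"
    using prod.mono_neutral_right[of "{..m}" "{m}" "\<lambda>i. \<delta> i ^ p ^ i"] assms(2) by auto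
  show "(\<Prod>i\<in>{1..m}. normj s p n (\<delta> i) ^ p ^ (i - 1)) = normj s p n (\<delta> m) ^ p ^ (m - 1)"
    using prod.mono_neutral_right[of "{1..m}" "{m}" "\<lambda>i. normj s p n (\<delta> i) ^ p ^ (i - 1)"] assms
    by (auto simp: normj_1)
  show "normj s p (n - 1) (\<delta> 0) = 1" using assms by (simp add: normj_1)
qed

lemma norm_pair_replicate_None_iff:
  "norm_pair s p n xi m (replicate m None) d \<longleftrightarrow> m \<ge> 1 \<and> int p dvd d - 1 \<and>
    (\<exists>\<alpha> \<beta>. \<alpha> \<noteq> 0 \<and> \<beta> \<noteq> 0 \<and> s \<alpha> = \<alpha> powi d * \<beta> ^ p ^ m \<and>
      xi = normj s p n \<alpha> powi ((d - 1) div int p) * normj s p n \<beta> ^ p ^ (m - 1))"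
  (is "_ \<longleftrightarrow> ?rhs")
proof
  assume "norm_pair s p n xi m (replicate m None) d"
  then obtain \<alpha> \<delta> where m: "m \<ge> 1" and "int p dvd d - 1"
    and "\<alpha> \<noteq> 0" "\<forall>i\<le>m. \<delta> i \<noteq> 0" and "\<forall>i<m. \<delta> i = 1"
    and "s \<alpha> = \<alpha> powi d * (\<Prod>i\<le>m. \<delta> i ^ p ^ i)"
    and "xi = normj s p n \<alpha> powi ((d - 1) div int p) * normj s p (n - 1) (\<delta> 0)
            * (\<Prod>i\<in>{1..m}. normj s p n (\<delta> i) ^ p ^ (i - 1))"
    by (auto simp: norm_pair_def)
  with norm_relation_products_trivial_below[OF m, of \<delta>] show ?rhs
    by (intro conjI exI[of _ \<alpha>] exI[of _ "\<delta> m"]) auto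
next
  assume ?rhs
  then obtain \<alpha> \<beta> where m: "m \<ge> 1" and "int p dvd d - 1" "\<alpha> \<noteq> 0" "\<beta> \<noteq> 0"
    and "s \<alpha> = \<alpha> powi d * \<beta> ^ p ^ m"
    and "xi = normj s p n \<alpha> powi ((d - 1) div int p) * normj s p n \<beta> ^ p ^ (m - 1)"
    by blast
  moreover define \<delta> where "\<delta> i = (if i = m then \<beta> else 1)" for i
  ultimately show "norm_pair s p n xi m (replicate m None) d"
    using norm_relation_products_trivial_below[OF m, of \<delta>] unfolding norm_pair_def
    by (intro conjI exI[of _ \<alpha>] exI[of _ \<delta>]) (auto simp: \<delta>_def)
qed

text \<open>With s acting on \<zeta> as \<zeta> \<mapsto> \<zeta>^c, the witnesses are \<alpha> = \<zeta>^a and \<beta> = \<zeta>^(at); both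
  norm relations become congruences modulo p^G between exponents of \<zeta>.\<close>
lemma norm_pair_of_eigenvector:
  fixes \<zeta> :: 'k
  assumes p: "prime p" and G: "G \<ge> 1" and \<zeta>: "prim_root p G \<zeta>" "s \<zeta> = \<zeta> powi c" and m: "m \<ge> 1"
    and q1: "d - 1 = int p * q1" and q2: "c - 1 = int p * q2"
    and S: "int p dvd (\<Sum>l<p ^ n. c ^ l)" and t: "int p ^ G dvd c - d - int p ^ m * t"
    and xi: "xi = \<zeta> powi ((\<Sum>l<p ^ n. c ^ l) * q2 * int a)"
  shows "norm_pair s p n xi m (replicate m None) d"
proof -
  define S where "S = (\<Sum>l<p ^ n. c ^ l)"
  note eq_iff = prim_root_powi_eq_iff[OF p G \<zeta>(1)]
  have \<zeta>0: "\<zeta> \<noteq> 0" by (rule prim_root_nonzero[OF p G \<zeta>(1)])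
  have norm: "normj s p n (\<zeta> powi e) = \<zeta> powi (e * S)" for e
    unfolding S_def by (rule normj_powi_eigenvector[OF \<zeta>(2) \<zeta>0])
  define \<alpha> \<beta> where "\<alpha> = \<zeta> powi int a" and "\<beta> = \<zeta> powi (int a * t)"
  have "s \<alpha> = \<zeta> powi (c * int a)" by (simp add: \<alpha>_def field_aut_power \<zeta>(2) power_int_power')
  also have "\<dots> = \<zeta> powi (int a * d + int a * t * int p ^ m)"
  proof -
    have "c * int a - (int a * d + int a * t * int p ^ m) = int a * (c - d - int p ^ m * t)"
      by (simp add: algebra_simps)
    thus ?thesis using eq_iff t by simp
  qed
  also have "\<dots> = \<alpha> powi d * \<beta> ^ p ^ m"
    by (simp add: \<alpha>_def \<beta>_def power_int_add[OF disjI1[OF \<zeta>0]] power_int_mult power_int_power')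
  finally have rel1: "s \<alpha> = \<alpha> powi d * \<beta> ^ p ^ m" .
  have "xi = \<zeta> powi (int a * S * q1 + int a * t * S * int p ^ (m - 1))"
  proof -
    have "S * q2 * int a - (int a * S * q1 + int a * t * S * int p ^ (m - 1))
        = - int a * (S * (q1 + t * int p ^ (m - 1) - q2))"
      by (simp add: algebra_simps)
    thus ?thesis using xi eq_iff norm_exponent_congruence[OF prime_gt_0_nat[OF p] G m S q1 q2 t]
      by (simp add: S_def)
  qed
  also have "\<dots> = (\<zeta> powi (int a * S)) powi q1 * (\<zeta> powi (int a * t * S)) ^ p ^ (m - 1)"
    by (simp only: power_int_add[OF disjI1[OF \<zeta>0]] power_int_power' of_nat_power
        flip: power_int_mult)
  also have "\<dots> = normj s p n \<alpha> powi ((d - 1) div int p) * normj s p n \<beta> ^ p ^ (m - 1)"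
    using prime_gt_0_nat[OF p] by (simp only: \<alpha>_def \<beta>_def norm) (simp add: q1)
  finally have rel2: "xi = normj s p n \<alpha> powi ((d - 1) div int p) * normj s p n \<beta> ^ p ^ (m - 1)" .
  have "\<alpha> \<noteq> 0" "\<beta> \<noteq> 0" "int p dvd d - 1" using \<zeta>0 q1 by (simp_all add: \<alpha>_def \<beta>_def)
  with rel1 rel2 m show ?thesis unfolding norm_pair_replicate_None_iff
    by (intro conjI exI[of _ \<alpha>] exI[of _ \<beta>])
qed

text \<open>The norm relation exhibits \<xi> as the p^u-th power of an element of F.\<close>
lemma fixed_prim_root_of_norm_pair:
  assumes p: "prime p" and period: "s ^^ (p ^ n) = id" and xi: "prim_root p 1 xi"
    and pair: "norm_pair s p n xi m (replicate m None) d"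
    and u: "u < m" and dvd: "int p ^ (u + 1) dvd d - 1"
  shows "\<exists>y. s y = y \<and> prim_root p (u + 1) y"
proof -
  obtain \<alpha> \<beta> where
    rel: "xi = normj s p n \<alpha> powi ((d - 1) div int p) * normj s p n \<beta> ^ p ^ (m - 1)"
    using pair by (auto simp: norm_pair_replicate_None_iff)
  obtain e where e: "d - 1 = int p ^ (u + 1) * e" using dvd by blast
  have "(d - 1) div int p = e * int p ^ u" using e p by (simp add: prime_gt_0_nat ac_simps)
  define A B where "A = normj s p n \<alpha>" and "B = normj s p n \<beta>"
  define y where "y = A powi e * B ^ p ^ (m - 1 - u)"
  have "p ^ (m - 1) = p ^ (m - 1 - u) * p ^ u" using u by (simp flip: power_add)
  hence "xi = A powi (e * int (p ^ u)) * B ^ (p ^ (m - 1 - u) * p ^ u)"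
    using rel \<open>(d - 1) div int p = e * int p ^ u\<close> by (simp add: A_def B_def)
  also have "\<dots> = y ^ p ^ u"
    by (simp only: y_def power_mult_distrib power_int_mult power_int_of_nat power_mult)
  finally have "xi = y ^ p ^ u" .
  moreover have "y ^ p ^ (u + 1) = (y ^ p ^ u) ^ p" by (simp add: mult.commute flip: power_mult)
  ultimately have "prim_root p (u + 1) y" using xi by (simp add: prim_root_def)
  moreover have "s y = y"
    by (simp add: y_def A_def B_def field_aut_mult field_aut_power field_aut_powi normj_fixed[OF period])
  ultimately show ?thesis by blast
qed

end

section \<open>Cyclotomic extensions\<close>

locale cyclotomic_extension =
  fixes \<sigma> :: "'k::field \<Rightarrow> 'k" and p n k :: nat
  assumes prime: "prime p" and cyclic: "cyclic_gen \<sigma> p n"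
    and k: "k \<ge> 1" and mu_k: "contains_mu (UNIV :: 'k set) p k"
    and generated: "\<And>S. subfield_set S \<Longrightarrow> baseF \<sigma> \<subseteq> S \<Longrightarrow> {z. z ^ p ^ k = 1} \<subseteq> S \<Longrightarrow> S = UNIV"
    and mu_p: "contains_mu (baseF \<sigma>) p 1"
    and mu_4: "p = 2 \<Longrightarrow> contains_mu (baseF \<sigma>) p 2"
begin

sublocale field_automorphism \<sigma>
  using cyclic by unfold_locales (simp add: cyclic_gen_def)

lemma order: "\<sigma> ^^ (p ^ n) = id"
  and not_id: "\<sigma> ^^ (p ^ (n - 1)) \<noteq> id"
  using cyclic by (simp_all add: cyclic_gen_def)

lemma n_ge_1: "n \<ge> 1"
  using order not_id by (cases n) auto

text \<open>A primitive p^M-th root of unity with M \<ge> k generates K = F(\<mu>_{p^k}) over F.\<close>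
lemma funpow_eq_id_if_fixes_prim_root:
  assumes z: "prim_root p M z" and "k \<le> M" and fixes_z: "(\<sigma> ^^ j) z = z"
  shows "\<sigma> ^^ j = id"
proof -
  interpret t: field_automorphism "\<sigma> ^^ j" by (rule field_automorphism_funpow)
  have "{x. (\<sigma> ^^ j) x = x} = UNIV"
  proof (rule generated)
    show "subfield_set {x. (\<sigma> ^^ j) x = x}" by (rule t.subfield_set_fixed)
    have "(\<sigma> ^^ i) x = x" if "\<sigma> x = x" for i x by (induction i) (simp_all add: that)
    thus "baseF \<sigma> \<subseteq> {x. (\<sigma> ^^ j) x = x}" by (auto simp: baseF_def)
  next
    define w where "w = z ^ p ^ (M - k)"
    have w: "prim_root p k w" using prim_root_pow_prim_root[OF z k \<open>k \<le> M\<close>] by (simp add: w_def)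
    have "(\<sigma> ^^ j) w = w" using fixes_z by (simp add: w_def t.field_aut_power)
    show "{y. y ^ p ^ k = 1} \<subseteq> {x. (\<sigma> ^^ j) x = x}"
    proof
      fix y :: 'k assume "y \<in> {y. y ^ p ^ k = 1}"
      then obtain i where "y = w ^ i" using root_of_unity_prim_root_power[OF prime k w] by auto
      thus "y \<in> {x. (\<sigma> ^^ j) x = x}" using \<open>(\<sigma> ^^ j) w = w\<close> by (simp add: t.field_aut_power)
    qed
  qed
  thus ?thesis by (auto simp: fun_eq_iff)
qed

lemma eigen_exponent_cong_1:
  assumes z: "prim_root p M z" "\<sigma> z = z powi c" and "M \<ge> 1"
  shows "int p dvd c - 1" and "p = 2 \<Longrightarrow> M \<ge> 2 \<Longrightarrow> 4 dvd c - 1"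
proof -
  obtain \<xi> where "\<sigma> \<xi> = \<xi>" "prim_root p 1 \<xi>"
    using mu_p by (auto simp: contains_mu_iff_prim_root baseF_def)
  thus "int p dvd c - 1" using prim_root_eigen_exponents_cong[OF prime _ \<open>M \<ge> 1\<close> z, of \<xi> 1] by simp
  assume "p = 2" "M \<ge> 2"
  obtain y where "\<sigma> y = y" "prim_root p 2 y"
    using mu_4[OF \<open>p = 2\<close>] by (auto simp: contains_mu_iff_prim_root baseF_def)
  thus "4 dvd c - 1"
    using prim_root_eigen_exponents_cong[OF prime _ \<open>M \<ge> 2\<close> z, of y 1] \<open>p = 2\<close> by simp
qed

text \<open>c is the cyclotomic character of \<sigma>. Since \<sigma>^(p^n) fixes z but \<sigma>^(p^(n-1)) does not,
  lifting the exponent forces M = v_p(c - 1) + n.\<close>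
lemma prim_root_exponent:
  assumes z: "prim_root p M z" and "k \<le> M" and two: "p = 2 \<Longrightarrow> M \<ge> 2"
  obtains c where "\<sigma> z = z powi c" "n < M" "int p ^ (M - n) dvd c - 1"
    "int p ^ M dvd c ^ p ^ n - 1" "\<not> int p ^ (M + 1) dvd c ^ p ^ n - 1"
proof -
  have M: "M \<ge> 1" using k \<open>k \<le> M\<close> by simp
  obtain c where c: "\<sigma> z = z powi c" using prim_root_eigenvector[OF prime M z] by blast
  have fixes_iff: "(\<sigma> ^^ j) z = z \<longleftrightarrow> int p ^ M dvd c ^ j - 1" for j
    using funpow_powi_eigenvector[OF c prim_root_nonzero[OF prime M z], of j 1]
      prim_root_powi_eq_iff[OF prime M z, of "c ^ j" 1] by simp
  have not_fixed: "\<not> int p ^ M dvd c ^ p ^ (n - 1) - 1"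
    using fixes_iff not_id funpow_eq_id_if_fixes_prim_root[OF z \<open>k \<le> M\<close>] by blast
  hence "c \<noteq> 1" by auto
  define w where "w = multiplicity (int p) (c - 1)"
  note lte = power_dvd_pow_prime_power_sub_1_iff[OF prime \<open>c \<noteq> 1\<close>
      eigen_exponent_cong_1(1)[OF z c M], folded w_def]
  have "p = 2 \<longrightarrow> 4 dvd c - 1" using eigen_exponent_cong_1(2)[OF z c M] two by blast
  note lte = lte[OF this]
  have "M \<le> w + n" using fixes_iff[of "p ^ n"] order lte by simp
  moreover have "\<not> M \<le> w + (n - 1)" using not_fixed lte by simp
  moreover have "w \<ge> 1" using eigen_exponent_cong_1(1)[OF z c M] lte[of 1 0] by simp
  ultimately have "M = w + n" "n < M" using n_ge_1 by auto
  have "int p ^ (M - n) dvd c - 1" using lte[of "M - n" 0] \<open>M = w + n\<close> by simp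
  moreover have "int p ^ M dvd c ^ p ^ n - 1" "\<not> int p ^ (M + 1) dvd c ^ p ^ n - 1"
    unfolding lte using \<open>M = w + n\<close> by simp_all
  ultimately show ?thesis using that c \<open>n < M\<close> by blast
qed

lemma contains_mu_bound:
  assumes "contains_mu (UNIV :: 'k set) p M"
  shows "M < max k 2 + n"
proof (rule ccontr)
  assume "\<not> M < max k 2 + n"
  hence M: "k \<le> M" "p = 2 \<Longrightarrow> M \<ge> 2" "k \<le> M - n" by auto
  obtain z :: 'k where z: "prim_root p M z" using assms by (auto simp: contains_mu_iff_prim_root)
  then obtain c where c: "\<sigma> z = z powi c" "n < M" "int p ^ (M - n) dvd c - 1"
    using prim_root_exponent[OF z M(1,2)] by blast
  define y where "y = z ^ p ^ n"
  have y: "prim_root p (M - n) y"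
    using prim_root_pow_prim_root[OF z, of "M - n"] c(2) by (simp add: y_def)
  have "\<sigma> y = y powi c" using eigenvector_power[OF c(1)] by (simp add: y_def)
  also have "\<dots> = y powi 1" using prim_root_powi_eq_iff[OF prime _ y, of c 1] c(2,3) by simp
  finally have "(\<sigma> ^^ 1) y = y" by simp
  hence "\<sigma> ^^ 1 = id" using funpow_eq_id_if_fixes_prim_root[OF y M(3)] by blast
  thus False using not_id by (simp add: id_funpow)
qed

lemma mu_level_UNIV:
  obtains G where "mu_level (UNIV :: 'k set) p = enat G" "contains_mu (UNIV :: 'k set) p G"
    "\<And>M. contains_mu (UNIV :: 'k set) p M \<Longrightarrow> M \<le> G" "k \<le> G" "p = 2 \<Longrightarrow> G \<ge> 2"
proof -
  have one: "contains_mu (UNIV :: 'k set) p 1" using mu_p by (auto simp: contains_mu_def)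
  obtain G where G: "mu_level (UNIV :: 'k set) p = enat G" "contains_mu (UNIV :: 'k set) p G"
    "\<And>M. contains_mu (UNIV :: 'k set) p M \<Longrightarrow> M \<le> G"
    using mu_level_finite[OF one contains_mu_bound] by blast
  moreover have "p = 2 \<Longrightarrow> G \<ge> 2"
    using G(3)[of 2] mu_4 by (auto simp: contains_mu_iff_prim_root)
  ultimately show ?thesis using that mu_k by blast
qed

lemma norm_pair_exists:
  fixes xi \<zeta> :: 'k
  assumes xi: "prim_root p 1 xi" and m: "m \<ge> 1"
    and \<zeta>: "prim_root p G \<zeta>" and G: "k \<le> G" "p = 2 \<Longrightarrow> G \<ge> 2"
    and chi: "chi_cong \<sigma> p d (min m G)"
  shows "norm_pair \<sigma> p n xi m (replicate m None) d"
proof -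
  have G1: "G \<ge> 1" using k G(1) by simp
  obtain c where c: "\<sigma> \<zeta> = \<zeta> powi c" "n < G" "int p ^ (G - n) dvd c - 1"
    "int p ^ G dvd c ^ p ^ n - 1" "\<not> int p ^ (G + 1) dvd c ^ p ^ n - 1"
    using prim_root_exponent[OF \<zeta> G] by blast
  have "int p dvd c - 1" by (rule eigen_exponent_cong_1(1)[OF \<zeta> c(1) G1])
  then obtain q2 where q2: "c - 1 = int p * q2" by blast
  have cd: "int p ^ min m G dvd c - d"
    using chi_cong_exponent_dvd[OF prime chi _ _ \<zeta> c(1)] m G1 by simp
  then obtain t where t: "int p ^ G dvd c - d - int p ^ m * t"
  proof (cases "m \<le> G")
    case True
    then obtain t where "c - d = int p ^ m * t" using cd by (auto simp: min_def)
    thus ?thesis using that[of t] by simp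
  qed (use cd that[of 0] in \<open>simp add: min_def\<close>)
  have "int p dvd int p ^ min m G" using m G1 by (simp add: dvd_power)
  hence "int p dvd c - d" using cd by (rule dvd_trans)
  with \<open>int p dvd c - 1\<close> have "int p dvd (c - 1) - (c - d)" by (rule dvd_diff)
  then obtain q1 where q1: "d - 1 = int p * q1" by fastforce
  define S where "S = (\<Sum>l<p ^ n. c ^ l)"
  have S: "int p dvd S" unfolding S_def
    using dvd_geometric_sum[OF \<open>int p dvd c - 1\<close>] n_ge_1 by (simp add: dvd_power)
  have "c ^ p ^ n - 1 = (c - 1) * S" unfolding S_def by (rule power_diff_1_eq)
  hence "int p * (S * q2) = c ^ p ^ n - 1" by (simp add: q2 ac_simps)
  hence \<eta>: "prim_root p 1 (\<zeta> powi (S * q2))"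
    using prim_root_1_powi[OF prime G1 \<zeta>, of "S * q2"] c(4,5) by argo
  then obtain a where "xi = (\<zeta> powi (S * q2)) ^ a"
    using root_of_unity_prim_root_power[OF prime _ \<eta>] xi by (auto simp: prim_root_def)
  hence "xi = \<zeta> powi (S * q2 * int a)" by (simp add: power_int_power')
  with S show ?thesis unfolding S_def
    by (rule norm_pair_of_eigenvector[OF prime G1 \<zeta> c(1) m q1 q2 _ t])
qed

lemma norm_pair_minimal:
  fixes xi :: 'k
  assumes xi: "prim_root p 1 xi" and G: "\<And>M. contains_mu (UNIV :: 'k set) p M \<Longrightarrow> M \<le> G"
    and chi: "chi_cong \<sigma> p d (min m G)" and pair: "norm_pair \<sigma> p n xi m a d'"
  shows "np_le p m (replicate m None) d a d'"
proof (cases "a = replicate m None")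
  case True
  have "int p ^ (u + 1) dvd d - 1" if u: "u < m" and dvd: "int p ^ (u + 1) dvd d' - 1" for u
  proof -
    obtain y where y: "\<sigma> y = y" "prim_root p (u + 1) y"
      using fixed_prim_root_of_norm_pair[OF prime order xi] pair True u dvd by blast
    have "u + 1 \<le> min m G" using G[of "u + 1"] y(2) u by (auto simp: contains_mu_iff_prim_root)
    hence "p ^ (u + 1) dvd p ^ min m G" by (rule le_imp_power_dvd)
    hence "y ^ p ^ min m G = 1" using prim_root_pow_eq_1_iff[OF prime _ y(2)] by simp
    hence "y powi d = y powi 1" using chi y(1) by (simp add: chi_cong_def)
    thus ?thesis using prim_root_powi_eq_iff[OF prime _ y(2), of d 1] by simp
  qed
  hence "vmin p m (d' - 1) \<le> vmin p m (d - 1)" by (rule vmin_le_vmin[OF prime_gt_1_nat[OF prime]])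
  thus ?thesis using True by (simp add: np_le_def)
next
  case False
  moreover have "length a = m" using pair by (simp add: norm_pair_def)
  ultimately show ?thesis using lex_less_replicate_None[of a m] by (simp add: np_le_def)
qed

end

theorem proposition3p3:
  fixes \<sigma> :: "'k::field \<Rightarrow> 'k" and p n m :: nat and \<xi> :: 'k and d :: int
  assumes "prime p" and "n \<ge> 1" and "cyclic_gen \<sigma> p n"
    and "of_nat p \<noteq> (0::'k)"
    and "\<xi> \<in> baseF \<sigma>" and "\<xi> ^ p = 1" and "\<xi> \<noteq> 1"
    and "m \<ge> 1"
    and "cyclotomic \<sigma> p"
    and "p = 2 \<longrightarrow> mu_level (baseF \<sigma>) p > 1"
    and "chi_cong \<sigma> p d (case mu_level (UNIV::'k set) p of enat v \<Rightarrow> min m v | \<infinity> \<Rightarrow> m)"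
  shows "minimal_norm_pair \<sigma> p n \<xi> m (replicate m None) d"
proof -
  have xi: "prim_root p 1 \<xi>" using assms(6,7) by (simp add: prim_root_def)
  obtain k where k: "k \<ge> 1" "contains_mu (UNIV :: 'k set) p k"
    and generated: "\<And>S. subfield_set S \<Longrightarrow> baseF \<sigma> \<subseteq> S \<Longrightarrow> {z. z ^ p ^ k = 1} \<subseteq> S \<Longrightarrow> S = UNIV"
    using assms(9) by (auto simp: cyclotomic_def)
  have closed: "z ^ j \<in> baseF \<sigma>" if "z \<in> baseF \<sigma>" for z j
    using that assms(3) field_automorphism.field_aut_power[of \<sigma>]
    by (simp add: baseF_def cyclic_gen_def field_automorphism_def)
  interpret cyclotomic_extension \<sigma> p n k
  proof
    show "contains_mu (baseF \<sigma>) p 1" using assms(5) xi by (auto simp: contains_mu_iff_prim_root)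
    show "p = 2 \<Longrightarrow> contains_mu (baseF \<sigma>) p 2"
      using assms(10) contains_mu_2_if_mu_level_gt_1[OF closed] by blast
  qed (use assms(1,3) k generated in auto)
  obtain G where G: "mu_level (UNIV :: 'k set) p = enat G" "contains_mu (UNIV :: 'k set) p G"
    "\<And>M. contains_mu (UNIV :: 'k set) p M \<Longrightarrow> M \<le> G" "k \<le> G" "p = 2 \<Longrightarrow> G \<ge> 2"
    using mu_level_UNIV by blast
  obtain \<zeta> :: 'k where \<zeta>: "prim_root p G \<zeta>" using G(2) by (auto simp: contains_mu_iff_prim_root)
  have chi: "chi_cong \<sigma> p d (min m G)" using assms(11) G(1) by simp
  show ?thesis unfolding minimal_norm_pair_def
    using norm_pair_exists[OF xi assms(8) \<zeta> G(4,5) chi] norm_pair_minimal[OF xi G(3) chi] by blast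
qed

end
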